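(* Let $\mu$ be a probability measure on $\mathbb{R}$ with compact infinite support and orthonormal polynomials $p_n(x;d\mu)$. Let $H$ be the convex hull of $\operatorname{supp}(\mu)$, $D=\frac12\operatorname{diam}(H)$, and for $z\in\mathbb{C}\setminus H$ let $d=\operatorname{dist}(z,H)$. Then for every $n\ge1$, $$|p_n(z;d\mu)|^2\ge\Bigl(\frac dD\Bigr)^2\Bigl(1+\Bigl(\frac dD\Bigr)^2\Bigr)^{n-1}.$$ In particular $p_n(z)\ne0$ for all $n$ and $\liminf_{n\to\infty}|p_n(z;d\mu)|^{1/n}\ge\bigl(1+(d/D)^2\bigr)^{1/2}>1$.
   Context: The orthonormal polynomials $p_n$ are obtained by Gram–Schmidt from $1,x,x^2,\dots$ in $L^2(\mu)$, with positive leading coefficients; $p_0=1$ since $\mu$ is a probability measure. *)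

theory Defs
  imports "HOL-Probability.Probability" "HOL-Computational_Algebra.Polynomial"
begin

definition measure_support :: "real measure \<Rightarrow> real set" where
  "measure_support \<mu> = {x. \<forall>U. open U \<and> x \<in> U \<longrightarrow> emeasure \<mu> U > 0}"

definition orthonormal_polys :: "real measure \<Rightarrow> (nat \<Rightarrow> real poly) \<Rightarrow> bool" where
  "orthonormal_polys \<mu> p \<longleftrightarrow>
     (\<forall>n. degree (p n) = n \<and> lead_coeff (p n) > 0) \<and>
     (\<forall>m n. integrable \<mu> (\<lambda>x. poly (p m) x * poly (p n) x) \<and>
            (\<integral>x. poly (p m) x * poly (p n) x \<partial>\<mu>) = (if m = n then 1 else 0))"

end

theory Submission
  imports Defs "HOL-Real_Asymp.Real_Asymp"
begin

text \<open>
  Let H = [a, b] be the convex hull of supp \<mu>, c its midpoint and D = (b - a) / 2.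
  Multiplication by x acts on the orthonormal basis p through the real symmetric
  Jacobi matrix J j k = \<integral> x p j p k d\<mu>, so e j = p j (z) satisfies
  z e j = \<Sum>k\<le>n. J j k e k for every j < n. Pairing these relations with cnj (e j)
  and summing gives, with K = \<Sum>j<n. |e j|^2,
      (z - m) K = e n cnj S,  m = (\<Sum>j,k<n. J j k cnj (e j) e k) / K,  S = \<Sum>j<n. J j n e j.
  Here m is a Rayleigh quotient of J, hence a point of [a, b], so |z - m| \<ge> d; and
  S = \<integral> (x - c) q p n d\<mu> for a polynomial q with \<integral> q^2 d\<mu> = K, so Cauchy-Schwarz
  gives |S|^2 \<le> D^2 K. Together d^2 K \<le> D^2 |e n|^2: each |p n (z)|^2 dominates (d / D)^2
  times the sum of the earlier ones, and since p 0 = 1 this yields the geometric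
  lower bound, the nonvanishing of p n (z) and the bound on the n-th roots.
\<close>

text \<open>A Borel measure on the reals is concentrated on its support: the complement
  is a union of open null sets, hence (Lindelof) of countably many.\<close>
lemma AE_in_measure_support:
  assumes "sets M = sets borel"
  shows "AE x in M. x \<in> measure_support M"
proof -
  define F where "F = {U. open U \<and> emeasure M U = 0}"
  have union_F: "\<Union>F = - measure_support M"
    unfolding F_def measure_support_def by (auto simp: not_less)
  obtain F' where F': "F' \<subseteq> F" "countable F'" "\<Union>F' = \<Union>F"
    using Lindelof[of F] unfolding F_def by blast
  have "(\<Union>U\<in>F'. U) \<in> null_sets M"
  proof (rule null_sets_UN')
    fix U assume "U \<in> F'"
    with F'(1) assms show "U \<in> null_sets M" by (auto simp: F_def null_sets_def)
  qed fact
  thus ?thesis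
    by (rule AE_I') (use F' union_F in auto)
qed

lemma quadratic_nonneg_imp_discriminant:
  fixes A B C :: real
  assumes "A \<ge> 0" and nonneg: "\<And>l. 0 \<le> A * l\<^sup>2 - 2 * B * l + C"
  shows "B\<^sup>2 \<le> A * C"
proof (cases "A = 0")
  case True
  have "B = 0"
  proof (rule ccontr)
    assume "B \<noteq> 0"
    have "0 \<le> A * ((C + 1) / (2 * B))\<^sup>2 - 2 * B * ((C + 1) / (2 * B)) + C" by (rule nonneg)
    with True \<open>B \<noteq> 0\<close> show False by simp
  qed
  thus ?thesis using True by simp
next
  case False
  with \<open>A \<ge> 0\<close> have "A > 0" by simp
  have "0 \<le> A * (B / A)\<^sup>2 - 2 * B * (B / A) + C" by (rule nonneg)
  also have "\<dots> = (A * C - B\<^sup>2) / A" using False by (simp add: field_simps power2_eq_square)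
  finally show ?thesis using \<open>A > 0\<close> by (simp add: zero_le_divide_iff)
qed

lemma integral_Cauchy_Schwarz:
  fixes f g :: "'a \<Rightarrow> real"
  assumes "integrable M (\<lambda>x. f x * g x)" "integrable M (\<lambda>x. (f x)\<^sup>2)" "integrable M (\<lambda>x. (g x)\<^sup>2)"
  shows "(\<integral>x. f x * g x \<partial>M)\<^sup>2 \<le> (\<integral>x. (f x)\<^sup>2 \<partial>M) * (\<integral>x. (g x)\<^sup>2 \<partial>M)"
proof (rule quadratic_nonneg_imp_discriminant)
  show "0 \<le> (\<integral>x. (f x)\<^sup>2 \<partial>M)" by simp
  fix l :: real
  have "0 \<le> (\<integral>x. (l * f x - g x)\<^sup>2 \<partial>M)" by simp
  also have "(\<lambda>x. (l * f x - g x)\<^sup>2) = (\<lambda>x. l\<^sup>2 * (f x)\<^sup>2 - 2 * l * (f x * g x) + (g x)\<^sup>2)"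
    by (simp add: power2_eq_square algebra_simps)
  also have "(\<integral>x. l\<^sup>2 * (f x)\<^sup>2 - 2 * l * (f x * g x) + (g x)\<^sup>2 \<partial>M)
      = l\<^sup>2 * (\<integral>x. (f x)\<^sup>2 \<partial>M) - 2 * l * (\<integral>x. f x * g x \<partial>M) + (\<integral>x. (g x)\<^sup>2 \<partial>M)"
    using assms by (simp add: integral_add integral_diff)
  finally show "0 \<le> (\<integral>x. (f x)\<^sup>2 \<partial>M) * l\<^sup>2 - 2 * (\<integral>x. f x * g x \<partial>M) * l + (\<integral>x. (g x)\<^sup>2 \<partial>M)"
    by (simp add: algebra_simps)
qed

lemma integral_weighted_mean_bounds:
  fixes g :: "real \<Rightarrow> real"
  assumes range: "AE x in M. a \<le> x \<and> x \<le> b" and nonneg: "\<And>x. g x \<ge> 0"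
    and "integrable M g" "integrable M (\<lambda>x. x * g x)"
  shows "a * (\<integral>x. g x \<partial>M) \<le> (\<integral>x. x * g x \<partial>M)" and "(\<integral>x. x * g x \<partial>M) \<le> b * (\<integral>x. g x \<partial>M)"
proof -
  have "AE x in M. a * g x \<le> x * g x" using range
    by eventually_elim (simp add: mult_right_mono nonneg)
  hence "(\<integral>x. a * g x \<partial>M) \<le> (\<integral>x. x * g x \<partial>M)"
    by (intro integral_mono_AE integrable_mult_right assms)
  thus "a * (\<integral>x. g x \<partial>M) \<le> (\<integral>x. x * g x \<partial>M)" by simp
  have "AE x in M. x * g x \<le> b * g x" using range
    by eventually_elim (simp add: mult_right_mono nonneg)
  hence "(\<integral>x. x * g x \<partial>M) \<le> (\<integral>x. b * g x \<partial>M)"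
    by (intro integral_mono_AE integrable_mult_right assms)
  thus "(\<integral>x. x * g x \<partial>M) \<le> b * (\<integral>x. g x \<partial>M)" by simp
qed

lemma convex_hull_compact_real:
  fixes S :: "real set"
  assumes "compact S" "S \<noteq> {}"
  shows "convex hull S = {Inf S..Sup S}"
proof
  have "bounded S" using assms(1) by (rule compact_imp_bounded)
  hence "S \<subseteq> {Inf S..Sup S}"
    by (auto intro!: cInf_lower cSup_upper bounded_imp_bdd_below bounded_imp_bdd_above)
  thus "convex hull S \<subseteq> {Inf S..Sup S}" by (rule hull_minimal) (rule convex_real_interval)
  have "Inf S \<in> S" "Sup S \<in> S"
    using assms \<open>bounded S\<close> by (auto intro!: closed_contains_Inf closed_contains_Sup compact_imp_closed
        bounded_imp_bdd_below bounded_imp_bdd_above)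
  hence "closed_segment (Inf S) (Sup S) \<subseteq> convex hull S"
    by (intro convex_contains_segment[THEN iffD1, rule_format] convex_convex_hull hull_inc)
  thus "{Inf S..Sup S} \<subseteq> convex hull S"
    using closed_segment_eq_real_ivl by (auto split: if_splits)
qed

lemma infinite_subset_interval_less:
  fixes S :: "real set"
  assumes "infinite S" "S \<subseteq> {a..b}"
  shows "a < b"
proof (rule ccontr)
  assume "\<not> a < b"
  hence "S \<subseteq> {a}" using assms(2) by auto
  thus False using assms(1) finite_subset by blast
qed

text \<open>If every term dominates r times the sum of its predecessors and the first
  term is 1, the partial sums gain a factor 1 + r at each step, so the terms
  grow like r (1 + r) ^ (n - 1).\<close>
lemma geometric_growth_from_partial_sums:
  fixes a :: "nat \<Rightarrow> real" and r :: real
  assumes "r \<ge> 0" and "a 0 = 1" and step: "\<And>n. n \<ge> 1 \<Longrightarrow> a n \<ge> r * (\<Sum>j<n. a j)"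
  shows "n \<ge> 1 \<Longrightarrow> a n \<ge> r * (1 + r) ^ (n - 1)"
proof -
  have partial: "(\<Sum>j<n. a j) \<ge> (1 + r) ^ (n - 1)" if "n \<ge> 1" for n
    using that
  proof (induction n rule: nat_induct_at_least)
    case base thus ?case using \<open>a 0 = 1\<close> by simp
  next
    case (Suc n)
    have "(1 + r) ^ (Suc n - 1) = (1 + r) * (1 + r) ^ (n - 1)"
      using Suc.hyps by (cases n) auto
    also have "\<dots> \<le> (1 + r) * (\<Sum>j<n. a j)"
      using Suc.IH \<open>r \<ge> 0\<close> by (intro mult_left_mono) auto
    also have "\<dots> \<le> (\<Sum>j<n. a j) + a n" using step[OF Suc.hyps] by (simp add: algebra_simps)
    finally show ?case by simp
  qed
  assume "n \<ge> 1"
  have "r * (1 + r) ^ (n - 1) \<le> r * (\<Sum>j<n. a j)"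
    using partial[OF \<open>n \<ge> 1\<close>] \<open>r \<ge> 0\<close> by (rule mult_left_mono)
  also have "\<dots> \<le> a n" by (rule step) fact
  finally show ?thesis .
qed

text \<open>A lower bound C q ^ n with C > 0 forces the n-th roots to have lim inf at
  least q, since C ^ (1 / n) tends to 1.\<close>
lemma liminf_root_ge:
  fixes f :: "nat \<Rightarrow> real"
  assumes "C > 0" "q > 0" and nonneg: "\<And>n. f n \<ge> 0" and bound: "\<And>n. n \<ge> 1 \<Longrightarrow> f n \<ge> C * q ^ n"
  shows "liminf (\<lambda>n. ereal (f n powr (1 / real n))) \<ge> ereal q"
proof -
  define g where "g n = C powr (1 / real n) * q" for n
  have g_le: "g n \<le> f n powr (1 / real n)" if "n \<ge> 1" for n
  proof -
    have "g n = (C * q ^ n) powr (1 / real n)"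
      using that assms by (simp add: g_def powr_mult powr_realpow[symmetric] powr_powr)
    also have "\<dots> \<le> f n powr (1 / real n)"
      using assms bound[OF that] by (intro powr_mono2) auto
    finally show ?thesis .
  qed
  have "(\<lambda>n. C powr (1 / real n)) \<longlonglongrightarrow> C powr 0"
    using \<open>C > 0\<close> by (intro tendsto_powr tendsto_const) (real_asymp, auto)
  hence "g \<longlonglongrightarrow> q" using \<open>C > 0\<close> unfolding g_def by (auto intro: tendsto_eq_intros)
  hence "ereal q = liminf (\<lambda>n. ereal (g n))" by (intro lim_imp_Liminf[symmetric]) auto
  also have "liminf (\<lambda>n. ereal (g n)) \<le> liminf (\<lambda>n. ereal (f n powr (1 / real n)))"
    using g_le by (intro Liminf_mono) (auto simp: eventually_sequentially)
  finally show ?thesis .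
qed

lemma liminf_root_ge_of_square_bound:
  fixes f :: "nat \<Rightarrow> real"
  assumes "r > 0" and nonneg: "\<And>n. f n \<ge> 0"
    and bound: "\<And>n. n \<ge> 1 \<Longrightarrow> r * (1 + r) ^ (n - 1) \<le> (f n)\<^sup>2"
  shows "liminf (\<lambda>n. ereal (f n powr (1 / real n))) \<ge> ereal (sqrt (1 + r))"
proof (rule liminf_root_ge[where C = "sqrt (r / (1 + r))"])
  fix n :: nat assume "n \<ge> 1"
  hence "r / (1 + r) * (1 + r) ^ n = r * (1 + r) ^ (n - 1)"
    using \<open>r > 0\<close> by (cases n) auto
  hence "sqrt (r / (1 + r)) * sqrt (1 + r) ^ n = sqrt (r * (1 + r) ^ (n - 1))"
    by (metis real_sqrt_mult real_sqrt_power)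
  also have "\<dots> \<le> sqrt ((f n)\<^sup>2)" using bound[OF \<open>n \<ge> 1\<close>] by (rule real_sqrt_le_mono)
  finally show "sqrt (r / (1 + r)) * sqrt (1 + r) ^ n \<le> f n" using nonneg[of n] by simp
qed (use \<open>r > 0\<close> nonneg in auto)

lemma hermitian_form_real:
  fixes J :: "nat \<Rightarrow> nat \<Rightarrow> real" and e :: "nat \<Rightarrow> complex"
  assumes sym: "\<And>j k. J j k = J k j"
  shows "(\<Sum>j\<in>I. \<Sum>k\<in>I. of_real (J j k) * cnj (e j) * e k)
       = of_real (\<Sum>j\<in>I. \<Sum>k\<in>I. J j k * (Re (e j) * Re (e k) + Im (e j) * Im (e k)))"
proof (rule complex_eqI)
  have "(\<Sum>j\<in>I. \<Sum>k\<in>I. J j k * (Re (e j) * Im (e k))) = (\<Sum>k\<in>I. \<Sum>j\<in>I. J j k * (Re (e j) * Im (e k)))"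
    by (rule sum.swap)
  also have "\<dots> = (\<Sum>j\<in>I. \<Sum>k\<in>I. J j k * (Im (e j) * Re (e k)))"
    by (simp add: sym mult_ac)
  finally show "Im (\<Sum>j\<in>I. \<Sum>k\<in>I. of_real (J j k) * cnj (e j) * e k) = Im (of_real (\<Sum>j\<in>I. \<Sum>k\<in>I. J j k * (Re (e j) * Re (e k) + Im (e j) * Im (e k))))"
    by (simp add: Im_sum algebra_simps sum_subtractf)
qed (simp add: Re_sum algebra_simps)

text \<open>If e satisfies the first n rows of a real
  symmetric recurrence z e = J e, then summing cnj (e j) times row j gives
  z K = T + e n cnj S, where K is the squared norm of e on the indices below n,
  T the (real) value of the form of J there, and S the pairing with column n.\<close>
lemma recurrence_kernel_identity:
  fixes J :: "nat \<Rightarrow> nat \<Rightarrow> real" and e :: "nat \<Rightarrow> complex"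
  assumes sym: "\<And>j k. J j k = J k j"
    and rec: "\<And>j. j < n \<Longrightarrow> z * e j = (\<Sum>k\<le>n. of_real (J j k) * e k)"
  shows "z * of_real (\<Sum>j<n. (cmod (e j))\<^sup>2)
       = of_real (\<Sum>j<n. \<Sum>k<n. J j k * (Re (e j) * Re (e k) + Im (e j) * Im (e k)))
         + e n * cnj (\<Sum>j<n. of_real (J j n) * e j)"
proof -
  have "z * of_real (\<Sum>j<n. (cmod (e j))\<^sup>2) = (\<Sum>j<n. cnj (e j) * (z * e j))"
    by (simp add: sum_distrib_left complex_norm_square mult_ac del: of_real_power)
  also have "\<dots> = (\<Sum>j<n. cnj (e j) * (\<Sum>k\<le>n. of_real (J j k) * e k))"
    by (intro sum.cong) (simp_all add: rec)
  also have "\<dots> = (\<Sum>j<n. \<Sum>k<n. of_real (J j k) * cnj (e j) * e k) + e n * cnj (\<Sum>j<n. of_real (J j n) * e j)"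
    by (simp add: lessThan_Suc_atMost[symmetric] sum_distrib_left sum.distrib distrib_left mult_ac)
  finally show ?thesis by (simp only: hermitian_form_real[OF sym])
qed

lemma map_poly_of_real_add:
  "map_poly of_real (f + g) = map_poly of_real f + (map_poly of_real g :: complex poly)"
  by (intro poly_eqI) (simp add: coeff_map_poly)

lemma poly_map_of_real_combination:
  "finite A \<Longrightarrow> poly (map_poly of_real (\<Sum>k\<in>A. smult (c k) (q k))) (z :: complex)
     = (\<Sum>k\<in>A. of_real (c k) * poly (map_poly of_real (q k)) z)"
  by (induction A rule: finite_induct) (simp_all add: map_poly_of_real_add map_poly_smult)

locale orthonormal_system =
  fixes \<mu> :: "real measure" and p :: "nat \<Rightarrow> real poly"
  assumes prob: "prob_space \<mu>" and sets_borel: "sets \<mu> = sets borel"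
    and orthonormal: "orthonormal_polys \<mu> p"
begin

lemma degree_p: "degree (p n) = n" and lead_coeff_p: "lead_coeff (p n) > 0"
  using orthonormal unfolding orthonormal_polys_def by blast+

lemma integrable_pp: "integrable \<mu> (\<lambda>x. poly (p m) x * poly (p n) x)"
  and integral_pp: "(\<integral>x. poly (p m) x * poly (p n) x \<partial>\<mu>) = (if m = n then 1 else 0)"
  using orthonormal unfolding orthonormal_polys_def by auto

text \<open>Since \<mu> is a probability measure, normalisation forces p 0 = 1.\<close>
lemma p_0: "p 0 = 1"
proof -
  define c where "c = coeff (p 0) 0"
  have p0_const: "p 0 = [:c:]" unfolding c_def using degree_p[of 0] by (metis degree_0_id)
  have "c > 0" using lead_coeff_p[of 0] degree_p[of 0] by (simp add: c_def)
  have "c * c = (\<integral>x. poly (p 0) x * poly (p 0) x \<partial>\<mu>)"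
    using prob_space.prob_space[OF prob] by (simp add: p0_const)
  also have "\<dots> = 1" by (simp add: integral_pp)
  finally have "(c - 1) * (c + 1) = 0" by (simp add: algebra_simps)
  hence "c = 1" using \<open>c > 0\<close> by simp
  thus ?thesis by (simp add: p0_const one_pCons)
qed

lemma expansion_in_p: "degree f \<le> n \<Longrightarrow> \<exists>c. f = (\<Sum>k\<le>n. smult (c k) (p k))"
proof (induction n arbitrary: f)
  case 0
  hence "f = [:coeff f 0:]" by (metis degree_0_id le_zero_eq)
  hence "f = (\<Sum>k\<le>0. smult ((\<lambda>_. coeff f 0) k) (p k))" by (simp add: p_0 one_pCons)
  thus ?case by (rule exI[where x="\<lambda>_. coeff f 0"])
next
  case (Suc n)
  define c0 where "c0 = coeff f (Suc n) / lead_coeff (p (Suc n))"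
  have "degree (f - smult c0 (p (Suc n))) \<le> n"
  proof (rule degree_le, intro allI impI)
    fix i assume "n < i"
    have "lead_coeff (p (Suc n)) \<noteq> 0" using lead_coeff_p[of "Suc n"] by (metis less_irrefl)
    moreover have "i > Suc n \<Longrightarrow> coeff f i = 0 \<and> coeff (p (Suc n)) i = 0"
      using Suc.prems degree_p[of "Suc n"] by (auto intro: coeff_eq_0)
    ultimately show "coeff (f - smult c0 (p (Suc n))) i = 0"
      using \<open>n < i\<close> degree_p[of "Suc n"] by (cases "i = Suc n") (auto simp: c0_def)
  qed
  then obtain c where c: "f - smult c0 (p (Suc n)) = (\<Sum>k\<le>n. smult (c k) (p k))"
    using Suc.IH by blast
  have "f = (f - smult c0 (p (Suc n))) + smult c0 (p (Suc n))" by simp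
  also have "\<dots> = (\<Sum>k\<le>Suc n. smult ((c(Suc n := c0)) k) (p k))"
    by (simp add: c)
  finally have "f = (\<Sum>k\<le>Suc n. smult ((c(Suc n := c0)) k) (p k))" .
  thus ?case by blast
qed

text \<open>Every polynomial is \<mu>-integrable: it is a combination of the p k, and each
  p k = p k * p 0 is integrable by orthonormality.\<close>
lemma integrable_poly: "integrable \<mu> (\<lambda>x. poly f x)"
proof -
  obtain c where c: "f = (\<Sum>k\<le>degree f. smult (c k) (p k))" using expansion_in_p by blast
  have "integrable \<mu> (\<lambda>x. \<Sum>k\<le>degree f. c k * (poly (p k) x * poly (p 0) x))"
    using integrable_pp by auto
  also have "(\<lambda>x. \<Sum>k\<le>degree f. c k * (poly (p k) x * poly (p 0) x)) = (\<lambda>x. poly f x)"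
  proof
    fix x
    have "poly f x = (\<Sum>k\<le>degree f. c k * poly (p k) x)"
      using arg_cong[OF c, of "\<lambda>q. poly q x"] by (simp add: poly_sum)
    thus "(\<Sum>k\<le>degree f. c k * (poly (p k) x * poly (p 0) x)) = poly f x" by (simp add: p_0)
  qed
  finally show ?thesis .
qed

lemma expansion_coefficient:
  assumes "f = (\<Sum>k\<le>n. smult (c k) (p k))" "m \<le> n"
  shows "(\<integral>x. poly f x * poly (p m) x \<partial>\<mu>) = c m"
proof -
  have "(\<integral>x. poly f x * poly (p m) x \<partial>\<mu>) = (\<integral>x. (\<Sum>k\<le>n. c k * (poly (p k) x * poly (p m) x)) \<partial>\<mu>)"
    by (simp add: assms(1) poly_sum sum_distrib_right mult.assoc)
  also have "\<dots> = (\<Sum>k\<le>n. c k * (if k = m then 1 else 0))"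
    by (simp add: integral_sum integrable_pp integral_pp)
  finally show ?thesis using assms(2) by (simp add: if_distrib sum.delta cong: if_cong)
qed

text \<open>The Jacobi matrix: the matrix of multiplication by x in the basis p.\<close>
definition jacobi :: "nat \<Rightarrow> nat \<Rightarrow> real" where
  "jacobi j k = (\<integral>x. x * poly (p j) x * poly (p k) x \<partial>\<mu>)"

lemma jacobi_sym: "jacobi j k = jacobi k j"
  unfolding jacobi_def by (simp add: mult_ac)

text \<open>Since x p j has degree j + 1, it is a combination of p 0, ..., p n for j < n,
  with coefficients from the Jacobi matrix.\<close>
lemma x_times_p: "j < n \<Longrightarrow> [:0, 1:] * p j = (\<Sum>k\<le>n. smult (jacobi j k) (p k))"
proof -
  assume "j < n"
  hence "degree ([:0, 1:] * p j) \<le> n"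
    using degree_mult_le[of "[:0, 1:]" "p j"] degree_p[of j] by simp
  then obtain c where c: "[:0, 1:] * p j = (\<Sum>k\<le>n. smult (c k) (p k))"
    using expansion_in_p by blast
  have "c k = jacobi j k" if "k \<le> n" for k
    using expansion_coefficient[OF c that] by (simp add: jacobi_def)
  with c show ?thesis by simp
qed

lemma x_times_p_at:
  fixes z :: complex
  assumes "j < n"
  shows "z * poly (map_poly of_real (p j)) z
       = (\<Sum>k\<le>n. of_real (jacobi j k) * poly (map_poly of_real (p k)) z)"
proof -
  have "poly (map_poly of_real ([:0, 1:] * p j)) z
       = poly (map_poly of_real (\<Sum>k\<le>n. smult (jacobi j k) (p k))) z"
    by (simp only: x_times_p[OF assms])
  thus ?thesis by (simp add: map_poly_pCons poly_map_of_real_combination)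
qed

lemma integral_combinations:
  assumes "finite I" "finite L"
  shows "(\<integral>x. poly W x * poly (\<Sum>j\<in>I. smult (\<alpha> j) (p j)) x * poly (\<Sum>k\<in>L. smult (\<beta> k) (p k)) x \<partial>\<mu>)
     = (\<Sum>j\<in>I. \<Sum>k\<in>L. \<alpha> j * \<beta> k * (\<integral>x. poly W x * poly (p j) x * poly (p k) x \<partial>\<mu>))"
proof -
  have "integrable \<mu> (\<lambda>x. poly W x * poly (p j) x * poly (p k) x)" for j k
    using integrable_poly[of "W * p j * p k"] by simp
  thus ?thesis using assms
    by (simp add: poly_sum sum_distrib_left sum_distrib_right integral_sum mult_ac)
qed

lemma parseval:
  "(\<integral>x. (poly (\<Sum>j<n. smult (c j) (p j)) x)\<^sup>2 \<partial>\<mu>) = (\<Sum>j<n. (c j)\<^sup>2)"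
  using integral_combinations[of "{..<n}" "{..<n}" 1 c c]
  by (simp add: power2_eq_square integral_pp if_distrib[of "\<lambda>t. _ * t"] sum.delta cong: if_cong)

lemma jacobi_form:
  "(\<integral>x. x * (poly (\<Sum>j<n. smult (c j) (p j)) x)\<^sup>2 \<partial>\<mu>) = (\<Sum>j<n. \<Sum>k<n. c j * c k * jacobi j k)"
  using integral_combinations[of "{..<n}" "{..<n}" "[:0, 1:]" c c]
  by (simp add: power2_eq_square jacobi_def mult.assoc)

lemma jacobi_form_bounds:
  assumes "measure_support \<mu> \<subseteq> {a..b}"
  shows "a * (\<Sum>j<n. (c j)\<^sup>2) \<le> (\<Sum>j<n. \<Sum>k<n. c j * c k * jacobi j k)"
    and "(\<Sum>j<n. \<Sum>k<n. c j * c k * jacobi j k) \<le> b * (\<Sum>j<n. (c j)\<^sup>2)"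
proof -
  define q where "q = (\<Sum>j<n. smult (c j) (p j))"
  have range: "AE x in \<mu>. a \<le> x \<and> x \<le> b"
    using AE_in_measure_support[OF sets_borel] by eventually_elim (use assms in auto)
  have "integrable \<mu> (\<lambda>x. (poly q x)\<^sup>2)" "integrable \<mu> (\<lambda>x. x * (poly q x)\<^sup>2)"
    using integrable_poly[of "q ^ 2"] integrable_poly[of "[:0, 1:] * q ^ 2"] by simp_all
  from integral_weighted_mean_bounds[OF range _ this]
  show "a * (\<Sum>j<n. (c j)\<^sup>2) \<le> (\<Sum>j<n. \<Sum>k<n. c j * c k * jacobi j k)"
    and "(\<Sum>j<n. \<Sum>k<n. c j * c k * jacobi j k) \<le> b * (\<Sum>j<n. (c j)\<^sup>2)"
    by (simp_all add: q_def parseval jacobi_form)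
qed

text \<open>The n-th column of the Jacobi matrix, paired with c, is an integral against p n;
  a shift of x by a constant does not change it since p n is orthogonal to lower degrees.\<close>
lemma jacobi_column:
  "(\<integral>x. (x - x0) * poly (\<Sum>j<n. smult (c j) (p j)) x * poly (p n) x \<partial>\<mu>) = (\<Sum>j<n. jacobi j n * c j)"
proof -
  have "(\<integral>x. (x - x0) * poly (p j) x * poly (p n) x \<partial>\<mu>) = jacobi j n" if "j < n" for j
  proof -
    have "(\<lambda>x. (x - x0) * poly (p j) x * poly (p n) x)
        = (\<lambda>x. x * poly (p j) x * poly (p n) x - x0 * (poly (p j) x * poly (p n) x))"
      by (simp add: algebra_simps)
    moreover have "integrable \<mu> (\<lambda>x. x * poly (p j) x * poly (p n) x)"
      using integrable_poly[of "[:0, 1:] * p j * p n"] by (simp add: mult.assoc)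
    ultimately show ?thesis
      using that by (simp add: integrable_pp integral_pp jacobi_def)
  qed
  thus ?thesis
    using integral_combinations[of "{..<n}" "{n}" "[:-x0, 1:]" c "\<lambda>_. 1"]
    by (simp add: mult.commute)
qed

lemma jacobi_column_bound:
  assumes "\<And>x. x \<in> measure_support \<mu> \<Longrightarrow> \<bar>x - x0\<bar> \<le> D"
  shows "(\<Sum>j<n. jacobi j n * c j)\<^sup>2 \<le> D\<^sup>2 * (\<Sum>j<n. (c j)\<^sup>2)"
proof -
  define q where "q = (\<Sum>j<n. smult (c j) (p j))"
  define f where "f x = (x - x0) * poly q x" for x
  have int_f2: "integrable \<mu> (\<lambda>x. (f x)\<^sup>2)"
    using integrable_poly[of "([:-x0, 1:] * q) ^ 2"] by (simp add: f_def left_diff_distrib)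
  have "(\<Sum>j<n. jacobi j n * c j)\<^sup>2 = (\<integral>x. f x * poly (p n) x \<partial>\<mu>)\<^sup>2"
    by (simp add: f_def q_def jacobi_column)
  also have "\<dots> \<le> (\<integral>x. (f x)\<^sup>2 \<partial>\<mu>) * (\<integral>x. (poly (p n) x)\<^sup>2 \<partial>\<mu>)"
  proof (rule integral_Cauchy_Schwarz[OF _ int_f2])
    show "integrable \<mu> (\<lambda>x. f x * poly (p n) x)"
      using integrable_poly[of "[:-x0, 1:] * q * p n"] by (simp add: f_def algebra_simps)
    show "integrable \<mu> (\<lambda>x. (poly (p n) x)\<^sup>2)"
      using integrable_pp[of n n] by (simp add: power2_eq_square)
  qed
  also have "(\<integral>x. (poly (p n) x)\<^sup>2 \<partial>\<mu>) = 1"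
    using integral_pp[of n n] by (simp add: power2_eq_square)
  also have "(\<integral>x. (f x)\<^sup>2 \<partial>\<mu>) \<le> (\<integral>x. D\<^sup>2 * (poly q x)\<^sup>2 \<partial>\<mu>)"
  proof (rule integral_mono_AE[OF int_f2])
    show "integrable \<mu> (\<lambda>x. D\<^sup>2 * (poly q x)\<^sup>2)"
      using integrable_poly[of "smult (D\<^sup>2) (q ^ 2)"] by simp
    show "AE x in \<mu>. (f x)\<^sup>2 \<le> D\<^sup>2 * (poly q x)\<^sup>2"
      using AE_in_measure_support[OF sets_borel]
    proof eventually_elim
      case (elim x)
      have "(x - x0)\<^sup>2 \<le> D\<^sup>2" using assms[OF elim] by (metis abs_ge_zero power2_abs power_mono)
      thus ?case by (simp add: f_def power_mult_distrib mult_right_mono)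
    qed
  qed
  also have "(\<integral>x. D\<^sup>2 * (poly q x)\<^sup>2 \<partial>\<mu>) = D\<^sup>2 * (\<Sum>j<n. (c j)\<^sup>2)"
    by (simp add: q_def parseval)
  finally show ?thesis by simp
qed

text \<open>The Rayleigh bounds for a complex coefficient vector e: the real Hermitian
  form of the Jacobi matrix splits into the forms of Re e and Im e.\<close>
lemma jacobi_hermitian_form_bounds:
  assumes support: "measure_support \<mu> \<subseteq> {a..b}"
  shows "a * (\<Sum>j<n. (cmod (e j))\<^sup>2)
           \<le> (\<Sum>j<n. \<Sum>k<n. jacobi j k * (Re (e j) * Re (e k) + Im (e j) * Im (e k)))"
    and "(\<Sum>j<n. \<Sum>k<n. jacobi j k * (Re (e j) * Re (e k) + Im (e j) * Im (e k)))
           \<le> b * (\<Sum>j<n. (cmod (e j))\<^sup>2)"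
  using jacobi_form_bounds[OF support, where n=n and c="\<lambda>j. Re (e j)"]
    jacobi_form_bounds[OF support, where n=n and c="\<lambda>j. Im (e j)"]
  by (simp_all add: cmod_power2 distrib_left sum.distrib mult_ac)

text \<open>The column bound for a complex coefficient vector, applied to real and
  imaginary parts separately.\<close>
lemma jacobi_column_bound_complex:
  assumes radius: "\<And>x. x \<in> measure_support \<mu> \<Longrightarrow> \<bar>x - x0\<bar> \<le> D"
  shows "(cmod (\<Sum>j<n. of_real (jacobi j n) * e j))\<^sup>2 \<le> D\<^sup>2 * (\<Sum>j<n. (cmod (e j))\<^sup>2)"
proof -
  have "(cmod (\<Sum>j<n. of_real (jacobi j n) * e j))\<^sup>2
      = (\<Sum>j<n. jacobi j n * Re (e j))\<^sup>2 + (\<Sum>j<n. jacobi j n * Im (e j))\<^sup>2"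
    by (simp add: cmod_power2 Re_sum Im_sum)
  also have "\<dots> \<le> D\<^sup>2 * (\<Sum>j<n. (Re (e j))\<^sup>2) + D\<^sup>2 * (\<Sum>j<n. (Im (e j))\<^sup>2)"
    by (intro add_mono jacobi_column_bound[OF radius])
  finally show ?thesis by (simp add: cmod_power2 sum.distrib distrib_left)
qed

lemma christoffel_bound:
  fixes z :: complex
  assumes support: "measure_support \<mu> \<subseteq> {a..b}"
    and radius: "\<And>x. x \<in> measure_support \<mu> \<Longrightarrow> \<bar>x - x0\<bar> \<le> D"
    and distance: "\<And>m. m \<in> {a..b} \<Longrightarrow> d \<le> cmod (z - of_real m)" and "d \<ge> 0"
  shows "d\<^sup>2 * (\<Sum>j<n. (cmod (poly (map_poly of_real (p j)) z))\<^sup>2)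
           \<le> D\<^sup>2 * (cmod (poly (map_poly of_real (p n)) z))\<^sup>2"
proof -
  define e where "e j = poly (map_poly of_real (p j)) z" for j
  define K where "K = (\<Sum>j<n. (cmod (e j))\<^sup>2)"
  define T where "T = (\<Sum>j<n. \<Sum>k<n. jacobi j k * (Re (e j) * Re (e k) + Im (e j) * Im (e k)))"
  define S where "S = (\<Sum>j<n. of_real (jacobi j n) * e j)"
  have kernel: "z * of_real K = of_real T + e n * cnj S"
    unfolding K_def T_def S_def
    by (rule recurrence_kernel_identity[OF jacobi_sym]) (simp add: e_def x_times_p_at)
  show ?thesis
  proof (cases "K = 0")
    case True
    thus ?thesis by (simp add: K_def e_def)
  next
    case False
    hence "K > 0" by (simp add: K_def order_le_neq_trans sum_nonneg)
    define m where "m = T / K"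
    have "m \<in> {a..b}"
      using jacobi_hermitian_form_bounds[OF support, where n=n and e=e] \<open>K > 0\<close>
      by (simp add: m_def K_def T_def field_simps)
    have "of_real K * (z - of_real m) = e n * cnj S"
      using kernel \<open>K > 0\<close> by (simp add: m_def algebra_simps)
    hence "K * cmod (z - of_real m) = cmod (e n) * cmod S"
      using \<open>K > 0\<close> by (metis complex_mod_cnj norm_mult norm_of_real abs_of_pos)
    hence "d * K \<le> cmod (e n) * cmod S"
      using distance[OF \<open>m \<in> {a..b}\<close>] \<open>K > 0\<close> by (metis mult.commute mult_right_mono less_imp_le)
    hence "(d * K)\<^sup>2 \<le> (cmod (e n))\<^sup>2 * (cmod S)\<^sup>2"
      using \<open>d \<ge> 0\<close> \<open>K > 0\<close> by (metis power_mono power_mult_distrib zero_le_mult_iff less_imp_le)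
    also have "\<dots> \<le> (cmod (e n))\<^sup>2 * (D\<^sup>2 * K)"
      using jacobi_column_bound_complex[OF radius, where n=n and e=e]
      by (intro mult_left_mono) (simp_all add: S_def K_def)
    finally have "(d\<^sup>2 * K) * K \<le> (D\<^sup>2 * (cmod (e n))\<^sup>2) * K"
      by (simp add: power2_eq_square mult_ac)
    thus ?thesis using \<open>K > 0\<close> by (simp add: K_def e_def)
  qed
qed

lemma growth_bound:
  fixes z :: complex
  assumes support: "measure_support \<mu> \<subseteq> {a..b}"
    and radius: "\<And>x. x \<in> measure_support \<mu> \<Longrightarrow> \<bar>x - x0\<bar> \<le> D"
    and distance: "\<And>m. m \<in> {a..b} \<Longrightarrow> d \<le> cmod (z - of_real m)"
    and "d > 0" "D > 0" and "n \<ge> 1"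
  shows "(d / D)\<^sup>2 * (1 + (d / D)\<^sup>2) ^ (n - 1) \<le> (cmod (poly (map_poly of_real (p n)) z))\<^sup>2"
proof -
  define A where "A n = (cmod (poly (map_poly complex_of_real (p n)) z))\<^sup>2" for n
  have "A n \<ge> (d / D)\<^sup>2 * (\<Sum>j<n. A j)" for n
    using christoffel_bound[OF support radius distance, of n] \<open>d > 0\<close> \<open>D > 0\<close>
    by (simp add: A_def power_divide field_simps)
  thus ?thesis
    using geometric_growth_from_partial_sums[of "(d / D)\<^sup>2" A n] \<open>n \<ge> 1\<close> by (simp add: A_def p_0)
qed

end

theorem proposition2p2:
  fixes \<mu> :: "real measure" and p :: "nat \<Rightarrow> real poly" and z :: complex
  assumes "prob_space \<mu>" and "sets \<mu> = sets borel"
    and "compact (measure_support \<mu>)" and "infinite (measure_support \<mu>)"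
    and "orthonormal_polys \<mu> p"
    and "H = convex hull (measure_support \<mu>)"
    and "D = diameter H / 2"
    and "z \<notin> complex_of_real ` H"
    and "d = infdist z (complex_of_real ` H)"
  shows "(\<forall>n\<ge>1. (cmod (poly (map_poly complex_of_real (p n)) z))\<^sup>2
                 \<ge> (d / D)\<^sup>2 * (1 + (d / D)\<^sup>2) ^ (n - 1))
       \<and> (\<forall>n. poly (map_poly complex_of_real (p n)) z \<noteq> 0)
       \<and> liminf (\<lambda>n. ereal (cmod (poly (map_poly complex_of_real (p n)) z) powr (1 / real n)))
           \<ge> ereal (sqrt (1 + (d / D)\<^sup>2))
       \<and> sqrt (1 + (d / D)\<^sup>2) > 1"
proof -
  interpret orthonormal_system \<mu> p by (rule orthonormal_system.intro) fact+
  define a b where "a = Inf (measure_support \<mu>)" and "b = Sup (measure_support \<mu>)"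
  have "measure_support \<mu> \<noteq> {}" using assms(4) by auto
  hence H: "H = {a..b}"
    unfolding assms(6) a_def b_def by (rule convex_hull_compact_real[OF assms(3)])
  have support: "measure_support \<mu> \<subseteq> {a..b}"
    using hull_subset[of "measure_support \<mu>" convex] H assms(6) by simp
  have "a < b" by (rule infinite_subset_interval_less[OF assms(4) support])
  have D: "D = (b - a) / 2" "D > 0" using assms(7) H \<open>a < b\<close> by simp_all
  have "closed (complex_of_real ` H)"
    unfolding H by (intro compact_imp_closed compact_continuous_image continuous_intros) simp
  hence "d > 0" using assms(8,9) H \<open>a < b\<close> by (auto intro: infdist_pos_not_in_closed)
  have distance: "d \<le> cmod (z - of_real m)" if "m \<in> {a..b}" for m
    using infdist_le[of "of_real m" "complex_of_real ` H" z] that assms(9) H by (simp add: dist_norm)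
  have radius: "\<bar>x - (a + b) / 2\<bar> \<le> D" if "x \<in> measure_support \<mu>" for x
    using subsetD[OF support that] D(1) by (simp add: abs_le_iff field_simps)
  note growth = growth_bound[OF support radius distance \<open>d > 0\<close> \<open>D > 0\<close>]
  have "0 < (d / D)\<^sup>2" using \<open>d > 0\<close> \<open>D > 0\<close> by simp
  have nonzero: "poly (map_poly complex_of_real (p n)) z \<noteq> 0" for n
  proof (cases "n = 0")
    case False
    have "0 < (d / D)\<^sup>2 * (1 + (d / D)\<^sup>2) ^ (n - 1)"
      using \<open>d > 0\<close> \<open>D > 0\<close> by (intro mult_pos_pos zero_less_power add_pos_nonneg) auto
    thus ?thesis using growth[of n] False by auto
  qed (simp add: p_0)
  moreover have "liminf (\<lambda>n. ereal (cmod (poly (map_poly complex_of_real (p n)) z) powr (1 / real n)))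
      \<ge> ereal (sqrt (1 + (d / D)\<^sup>2))"
    using growth by (intro liminf_root_ge_of_square_bound \<open>0 < (d / D)\<^sup>2\<close>) auto
  ultimately show ?thesis using growth \<open>0 < (d / D)\<^sup>2\<close> by auto
qed

end
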